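(* On six qubits let $|\Psi\rangle_6=\tfrac{1}{\sqrt2}(|0\rangle_6+|\overline{\mathrm{D}}\rangle_6)$ with $|\overline{\mathrm{D}}\rangle_6=\tfrac13\sum_{\{i,j\}\in P}|ij\rangle_6$, where $P=\{\{1,3\},\{1,4\},\{1,5\},\{2,4\},\{2,5\},\{2,6\},\{3,5\},\{3,6\},\{4,6\}\}$. Let $\mathcal{N}_2$ be the neighborhood structure consisting of all two-element subsets of $\{1,\dots,6\}$. Then $|\Psi\rangle_6$ is UDA relative to $\mathcal{N}_2$; moreover, the 2-local operator $\mathbb{W}_6=\sum_{\{i,j\}\in P}(\sigma^+_i\sigma^+_j+\sigma^-_j\sigma^-_i)$ satisfies $\langle\Psi|\mathbb{W}_6|\Psi\rangle_6>\langle\phi|\mathbb{W}_6|\phi\rangle$ for every normalized $|\phi\rangle\in\mathcal{H}_{\mathcal{N}_2}(|\Psi\rangle_6)$ with $|\phi\rangle\langle\phi|\ne|\Psi\rangle_6\langle\Psi|$.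
   Context: $\mathcal{H}=(\mathbb{C}^2)^{\otimes6}$. $|0\rangle_6=|0\rangle^{\otimes6}$ and $|ij\rangle_6$ is the computational basis state with qubits $i,j$ in $|1\rangle$ and all others in $|0\rangle$. On a pair of qubits $i,j$, $\sigma^+_i\sigma^+_j$ acts as $|11\rangle\langle00|$ and $\sigma^-_j\sigma^-_i$ as its adjoint $|00\rangle\langle11|$ (tensored with identity elsewhere). For $\rho=|\psi\rangle\langle\psi|$ and a neighborhood $\mathcal{N}_k$ with complement $\overline{\mathcal{N}}_k$, $\rho_{\mathcal{N}_k}=\mathrm{tr}_{\overline{\mathcal{N}}_k}\rho$; the DQLS subspace is $\mathcal{H}_{\mathcal{N}}(|\psi\rangle)=\bigcap_{\mathcal{N}_k\in\mathcal{N}}\mathrm{supp}(\rho_{\mathcal{N}_k}\otimes I_{\overline{\mathcal{N}}_k})$. A state $\rho$ is UDA relative to $\mathcal{N}$ if no density operator $\sigma\ne\rho$ has $\sigma_{\mathcal{N}_k}=\rho_{\mathcal{N}_k}$ for all $\mathcal{N}_k\in\mathcal{N}$. *)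

theory Defs
  imports Complex_Main
begin

text \<open>Six qubits labelled 1..6. A computational basis state is identified with the
set of qubits that are in state |1>. Vectors of H = (C^2)^{\<otimes>6} are functions on
subsets of {1..6} (zero elsewhere); operators are matrices indexed by such subsets.\<close>

type_synonym qvec = "nat set \<Rightarrow> complex"
type_synonym qop = "nat set \<Rightarrow> nat set \<Rightarrow> complex"

definition Q :: "nat set" where "Q = {1..6}"

definition ket :: "nat set \<Rightarrow> qvec" where
  "ket S = (\<lambda>T. if T = S then 1 else 0)"

definition inner :: "qvec \<Rightarrow> qvec \<Rightarrow> complex" where
  "inner v w = (\<Sum>S\<in>Pow Q. cnj (v S) * w S)"

definition app :: "qop \<Rightarrow> qvec \<Rightarrow> qvec" where
  "app A v = (\<lambda>S. if S \<subseteq> Q then (\<Sum>T\<in>Pow Q. A S T * v T) else 0)"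

definition proj :: "qvec \<Rightarrow> qop" where
  "proj \<psi> = (\<lambda>S T. if S \<subseteq> Q \<and> T \<subseteq> Q then \<psi> S * cnj (\<psi> T) else 0)"

definition density :: "qop \<Rightarrow> bool" where
  "density \<sigma> \<longleftrightarrow>
     (\<forall>S T. \<not> (S \<subseteq> Q \<and> T \<subseteq> Q) \<longrightarrow> \<sigma> S T = 0) \<and>
     (\<forall>v. Im (inner v (app \<sigma> v)) = 0 \<and> Re (inner v (app \<sigma> v)) \<ge> 0) \<and>
     (\<Sum>S\<in>Pow Q. \<sigma> S S) = 1"

definition ptrace :: "nat set \<Rightarrow> qop \<Rightarrow> qop" where
  "ptrace N \<rho> = (\<lambda>A B. if A \<subseteq> N \<and> B \<subseteq> N
        then (\<Sum>C\<in>Pow (Q - N). \<rho> (A \<union> C) (B \<union> C)) else 0)"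

text \<open>X \<otimes> I on the complement of N.\<close>
definition tensor_id :: "nat set \<Rightarrow> qop \<Rightarrow> qop" where
  "tensor_id N X = (\<lambda>S T. if S \<subseteq> Q \<and> T \<subseteq> Q \<and> S - N = T - N
        then X (S \<inter> N) (T \<inter> N) else 0)"

definition supp :: "qop \<Rightarrow> qvec set" where
  "supp A = range (app A)"

definition DQLS :: "nat set set \<Rightarrow> qvec \<Rightarrow> qvec set" where
  "DQLS Ns \<psi> = (\<Inter>N\<in>Ns. supp (tensor_id N (ptrace N (proj \<psi>))))"

definition UDA :: "nat set set \<Rightarrow> qop \<Rightarrow> bool" where
  "UDA Ns \<rho> \<longleftrightarrow> (\<forall>\<sigma>. density \<sigma> \<and> (\<forall>N\<in>Ns. ptrace N \<sigma> = ptrace N \<rho>) \<longrightarrow> \<sigma> = \<rho>)"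

definition N2 :: "nat set set" where
  "N2 = {N. N \<subseteq> Q \<and> card N = 2}"

definition P :: "nat set set" where
  "P = {{1,3},{1,4},{1,5},{2,4},{2,5},{2,6},{3,5},{3,6},{4,6}}"

definition Dbar :: qvec where
  "Dbar = (\<lambda>S. (1/3) * (\<Sum>p\<in>P. ket p S))"

definition Psi :: qvec where
  "Psi = (\<lambda>S. (ket {} S + Dbar S) / complex_of_real (sqrt 2))"

text \<open>sigma+_i sigma+_j = |11><00| on qubits p={i,j}, identity elsewhere, and its adjoint.\<close>
definition raise2 :: "nat set \<Rightarrow> qop" where
  "raise2 p = (\<lambda>S T. if S \<subseteq> Q \<and> T \<subseteq> Q \<and> T \<inter> p = {} \<and> S = T \<union> p then 1 else 0)"

definition lower2 :: "nat set \<Rightarrow> qop" where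
  "lower2 p = (\<lambda>S T. if S \<subseteq> Q \<and> T \<subseteq> Q \<and> S \<inter> p = {} \<and> T = S \<union> p then 1 else 0)"

definition W6 :: qop where
  "W6 = (\<lambda>S T. \<Sum>p\<in>P. raise2 p S T + lower2 p S T)"

end

theory Submission
  imports Defs "HOL-Library.Complex_Order"
begin

text \<open>Every pair of qubits outside P is an edge of the hexagon 1-2-3-4-5-6-1, and
  Psi has no amplitude on a basis state containing such an edge. Both a state with the
  two-qubit marginals of Psi and every vector of the DQLS subspace are therefore supported
  on the 18 basis states labelled by the independent sets of the hexagon. On that span,
  3 I - W6 is the sum of squares
  3 \<Sum>p |w_p><w_p| + \<Sum>(t,c) (|v_tc><v_tc| + 2 |c><c|),
  where w_p = |p> - |{}>/3 for p in P, and v_tc = |t> - |c> for the triangles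
  t = {1,3,5}, {2,4,6} and c in t. Psi is orthogonal to all these vectors and they span
  its orthogonal complement, so tr(\<sigma> W6) \<le> 3 with equality exactly for
  \<sigma> = |Psi><Psi|. A state with the pair marginals of Psi has tr(\<sigma> W6) = 3
  because W6 is a sum of two-qubit terms on the pairs of P; this gives UDA, and the
  energy bound gives the strict inequality on the DQLS subspace.\<close>

section \<open>Quadratic forms and density operators\<close>

lemma Q_eq: "Q = {1,2,3,4,5,6}"
  unfolding Q_def by auto

lemma finite_Q [simp]: "finite Q" and finite_Pow_Q [simp]: "finite (Pow Q)"
  unfolding Q_def by simp_all

lemma sum_Pow_Q_mult_ket: "A \<subseteq> Q \<Longrightarrow> (\<Sum>S\<in>Pow Q. h S * ket A S) = h A"
  by (simp add: ket_def if_distrib[of "(*) _"] sum.delta cong: if_cong)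

lemma sum_Pow_Q_ket_mult: "A \<subseteq> Q \<Longrightarrow> (\<Sum>S\<in>Pow Q. ket A S * h S) = h A"
  using sum_Pow_Q_mult_ket[of A h] by (simp add: mult.commute)

lemma cnj_ket [simp]: "cnj (ket A S) = ket A S"
  unfolding ket_def by simp

lemma inner_ket: "A \<subseteq> Q \<Longrightarrow> inner v (ket A) = cnj (v A)"
  unfolding inner_def by (rule sum_Pow_Q_mult_ket)

lemma inner_ket_add_ket:
  assumes "A \<subseteq> Q" "B \<subseteq> Q"
  shows "inner v (\<lambda>S. ket A S + a * ket B S) = cnj (v A) + a * cnj (v B)"
  using sum_Pow_Q_mult_ket[OF assms(1), of "\<lambda>S. cnj (v S)"]
    sum_Pow_Q_mult_ket[OF assms(2), of "\<lambda>S. a * cnj (v S)"]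
  unfolding inner_def by (simp add: distrib_left sum.distrib mult_ac)

definition qform :: "qop \<Rightarrow> qvec \<Rightarrow> complex" where
  "qform \<sigma> w = inner w (app \<sigma> w)"

lemma qform_eq_sum: "qform \<sigma> w = (\<Sum>S\<in>Pow Q. \<Sum>T\<in>Pow Q. cnj (w S) * \<sigma> S T * w T)"
  unfolding qform_def inner_def app_def by (auto simp: sum_distrib_left mult.assoc intro!: sum.cong)

lemma qform_add_ket:
  assumes A: "A \<subseteq> Q"
  shows "qform \<sigma> (\<lambda>S. w S + a * ket A S) =
    qform \<sigma> w + a * (\<Sum>S\<in>Pow Q. cnj (w S) * \<sigma> S A) + cnj a * (\<Sum>T\<in>Pow Q. \<sigma> A T * w T)
    + cnj a * a * \<sigma> A A"
proof -
  let ?k = "ket A"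
  have expand: "cnj (w S + a * ?k S) * \<sigma> S T * (w T + a * ?k T) =
     cnj (w S) * \<sigma> S T * w T + (a * cnj (w S) * \<sigma> S T) * ?k T + ?k S * (cnj a * \<sigma> S T * w T)
     + ?k S * ((cnj a * a * \<sigma> S T) * ?k T)" for S T
    by (simp add: algebra_simps)
  have "qform \<sigma> (\<lambda>S. w S + a * ?k S) =
     (\<Sum>S\<in>Pow Q. \<Sum>T\<in>Pow Q. cnj (w S) * \<sigma> S T * w T) +
     (\<Sum>S\<in>Pow Q. \<Sum>T\<in>Pow Q. (a * cnj (w S) * \<sigma> S T) * ?k T) +
     (\<Sum>S\<in>Pow Q. ?k S * (\<Sum>T\<in>Pow Q. cnj a * \<sigma> S T * w T)) +
     (\<Sum>S\<in>Pow Q. ?k S * (\<Sum>T\<in>Pow Q. (cnj a * a * \<sigma> S T) * ?k T))"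
    unfolding qform_eq_sum expand by (simp add: sum.distrib sum_distrib_left)
  also have "\<dots> = qform \<sigma> w + (\<Sum>S\<in>Pow Q. a * cnj (w S) * \<sigma> S A) +
     (\<Sum>T\<in>Pow Q. cnj a * \<sigma> A T * w T) + cnj a * a * \<sigma> A A"
    unfolding qform_eq_sum sum_Pow_Q_mult_ket[OF A] sum_Pow_Q_ket_mult[OF A] by simp
  finally show ?thesis by (simp add: sum_distrib_left mult.assoc)
qed

lemma qform_ket: "A \<subseteq> Q \<Longrightarrow> qform \<sigma> (ket A) = \<sigma> A A"
  by (simp add: qform_eq_sum sum_Pow_Q_mult_ket sum_Pow_Q_ket_mult)

lemma qform_ket_add_ket:
  assumes "A \<subseteq> Q" "B \<subseteq> Q"
  shows "qform \<sigma> (\<lambda>S. ket A S + a * ket B S) =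
    \<sigma> A A + a * \<sigma> A B + cnj a * \<sigma> B A + cnj a * a * \<sigma> B B"
  using assms by (simp add: qform_add_ket qform_ket sum_Pow_Q_mult_ket sum_Pow_Q_ket_mult)

lemma qform_proj: "qform (proj \<phi>) w = cnj (inner \<phi> w) * inner \<phi> w"
proof -
  have "qform (proj \<phi>) w = (\<Sum>S\<in>Pow Q. cnj (w S) * \<phi> S) * (\<Sum>T\<in>Pow Q. cnj (\<phi> T) * w T)"
    unfolding qform_eq_sum sum_product by (auto simp: proj_def mult_ac intro!: sum.cong)
  also have "(\<Sum>S\<in>Pow Q. cnj (w S) * \<phi> S) = cnj (inner \<phi> w)"
    unfolding inner_def by (simp add: mult.commute)
  finally show ?thesis unfolding inner_def .
qed

lemma density_vanishes_outside: "density \<sigma> \<Longrightarrow> \<not> (S \<subseteq> Q \<and> T \<subseteq> Q) \<Longrightarrow> \<sigma> S T = 0"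
  unfolding density_def by blast

lemma density_qform_nonneg: "density \<sigma> \<Longrightarrow> 0 \<le> qform \<sigma> w"
  unfolding density_def qform_def less_eq_complex_def by simp

lemma density_proj:
  assumes "inner \<phi> \<phi> = 1"
  shows "density (proj \<phi>)"
proof -
  have "(\<Sum>S\<in>Pow Q. proj \<phi> S S) = inner \<phi> \<phi>"
    unfolding inner_def by (auto simp: proj_def mult.commute intro!: sum.cong)
  then show ?thesis
    using assms unfolding density_def qform_def[symmetric] qform_proj
    by (auto simp: proj_def complex_mult_cnj)
qed

lemma nonneg_quadratic_linear_coeff_zero:
  fixes s d :: real
  assumes nonneg: "\<And>r. 0 \<le> r * s + r\<^sup>2 * d"
  shows "s = 0"
proof (rule ccontr)
  assume s: "s \<noteq> 0"
  define k where "k = \<bar>d\<bar> + 1"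
  have k: "k > 0" "d < k" unfolding k_def by auto
  have "0 \<le> (-s/k) * s + (-s/k)\<^sup>2 * d" by (rule nonneg)
  then have "0 \<le> k\<^sup>2 * ((-s/k) * s + (-s/k)\<^sup>2 * d)" by simp
  also have "\<dots> = s\<^sup>2 * (d - k)" using k by (simp add: field_simps power2_eq_square)
  also have "\<dots> < 0" using s k by (simp add: mult_pos_neg)
  finally show False by simp
qed

lemma nonneg_complex_quadratic_linear_coeffs_zero:
  fixes X Y d :: complex
  assumes nonneg: "\<And>a. 0 \<le> a * Y + cnj a * X + cnj a * a * d"
  shows "X = 0 \<and> Y = 0"
proof -
  have "0 \<le> r * Re (X + Y) + r\<^sup>2 * Re d" for r :: real
    using nonneg[of "complex_of_real r"]
    by (simp add: less_eq_complex_def power2_eq_square; simp add: algebra_simps)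
  then have re: "Re (X + Y) = 0" by (rule nonneg_quadratic_linear_coeff_zero)
  have "0 \<le> r * (Im X - Im Y) + r\<^sup>2 * Re d" for r :: real
    using nonneg[of "\<i> * complex_of_real r"]
    by (simp add: less_eq_complex_def power2_eq_square; simp add: algebra_simps)
  then have im: "Im X - Im Y = 0" by (rule nonneg_quadratic_linear_coeff_zero)
  have "Im X + Im Y + Im d = 0" "- Im X - Im Y + Im d = 0" "Re Y - Re X + Im d = 0"
    using nonneg[of 1] nonneg[of "-1"] nonneg[of "\<i>"] by (simp_all add: less_eq_complex_def)
  with re im have "Re X = 0" "Re Y = 0" "Im X = 0" "Im Y = 0" by auto
  then show ?thesis by (simp add: complex_eq_iff)
qed

text \<open>If w is isotropic for a positive semidefinite \<sigma>, adding a multiple of a basis vector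
  to w gives a quadratic form without constant term; positivity kills its linear terms.\<close>
lemma density_qform_zero_annihilates:
  assumes dens: "density \<sigma>" and zero: "qform \<sigma> w = 0"
  shows "(\<Sum>T\<in>Pow Q. \<sigma> A T * w T) = 0 \<and> (\<Sum>S\<in>Pow Q. cnj (w S) * \<sigma> S A) = 0"
proof (cases "A \<subseteq> Q")
  case True
  show ?thesis
  proof (rule nonneg_complex_quadratic_linear_coeffs_zero)
    fix a
    show "0 \<le> a * (\<Sum>S\<in>Pow Q. cnj (w S) * \<sigma> S A) + cnj a * (\<Sum>T\<in>Pow Q. \<sigma> A T * w T)
        + cnj a * a * \<sigma> A A"
      using density_qform_nonneg[OF dens, of "\<lambda>S. w S + a * ket A S"]
      unfolding qform_add_ket[OF True] zero by simp
  qed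
next
  case False
  then show ?thesis by (simp add: density_vanishes_outside[OF dens])
qed

lemma density_qform_ket_add_ket_zero:
  assumes dens: "density \<sigma>" and zero: "qform \<sigma> (\<lambda>S. ket A S + a * ket B S) = 0"
    and A: "A \<subseteq> Q" and B: "B \<subseteq> Q"
  shows "\<sigma> X A + a * \<sigma> X B = 0 \<and> \<sigma> A X + cnj a * \<sigma> B X = 0"
proof -
  have "(\<Sum>T\<in>Pow Q. \<sigma> X T * (ket A T + a * ket B T)) = \<sigma> X A + a * \<sigma> X B"
    using sum_Pow_Q_mult_ket[OF A, of "\<sigma> X"] sum_Pow_Q_mult_ket[OF B, of "\<lambda>T. a * \<sigma> X T"]
    by (simp add: distrib_left sum.distrib mult_ac)
  moreover have "(\<Sum>S\<in>Pow Q. cnj (ket A S + a * ket B S) * \<sigma> S X) = \<sigma> A X + cnj a * \<sigma> B X"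
    using sum_Pow_Q_ket_mult[OF A, of "\<lambda>S. \<sigma> S X"] sum_Pow_Q_ket_mult[OF B, of "\<lambda>S. cnj a * \<sigma> S X"]
    by (simp add: distrib_right sum.distrib mult.assoc mult.left_commute[of "cnj a"])
  ultimately show ?thesis using density_qform_zero_annihilates[OF dens zero, of X] by simp
qed

lemma density_qform_ket_zero:
  assumes "density \<sigma>" "qform \<sigma> (ket A) = 0" "A \<subseteq> Q"
  shows "\<sigma> X A = 0 \<and> \<sigma> A X = 0"
  using density_qform_zero_annihilates[OF assms(1,2), of X] assms(3)
  by (simp add: sum_Pow_Q_mult_ket sum_Pow_Q_ket_mult)

section \<open>The hexagon and its independent sets\<close>

definition cycle_edges :: "nat set set" where
  "cycle_edges = {{1,2},{2,3},{3,4},{4,5},{5,6},{6,1}}"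

definition indep_sets :: "nat set set" where
  "indep_sets = set [{}, {1}, {2}, {3}, {4}, {5}, {6},
     {1,3}, {1,4}, {1,5}, {2,4}, {2,5}, {2,6}, {3,5}, {3,6}, {4,6}, {1,3,5}, {2,4,6}]"

definition triangles :: "nat set set" where
  "triangles = {{1,3,5},{2,4,6}}"

lemma indep_sets_subset_Pow_Q: "indep_sets \<subseteq> Pow Q"
  unfolding indep_sets_def Q_eq by auto

lemma mem_indep_sets_iff: "S \<in> indep_sets \<longleftrightarrow> S \<subseteq> Q \<and> (\<forall>e\<in>cycle_edges. \<not> e \<subseteq> S)"
proof
  assume "S \<in> indep_sets"
  then show "S \<subseteq> Q \<and> (\<forall>e\<in>cycle_edges. \<not> e \<subseteq> S)"
    unfolding indep_sets_def cycle_edges_def Q_eq by auto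
next
  assume S: "S \<subseteq> Q \<and> (\<forall>e\<in>cycle_edges. \<not> e \<subseteq> S)"
  have "\<exists>T\<in>indep_sets. \<forall>i\<in>Q. i \<in> S \<longleftrightarrow> i \<in> T"
    using S unfolding indep_sets_def cycle_edges_def Q_eq
    by (cases "1 \<in> S"; cases "2 \<in> S"; cases "3 \<in> S"; cases "4 \<in> S"; cases "5 \<in> S"; cases "6 \<in> S";
        simp)
  then obtain T where T: "T \<in> indep_sets" "\<forall>i\<in>Q. i \<in> S \<longleftrightarrow> i \<in> T" ..
  have "T \<subseteq> Q" using T(1) indep_sets_subset_Pow_Q by blast
  with S T(2) have "S = T" by blast
  with T(1) show "S \<in> indep_sets" by simp
qed

lemma not_indep_if_cycle_edge_subset: "e \<in> cycle_edges \<Longrightarrow> e \<subseteq> S \<Longrightarrow> S \<notin> indep_sets"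
  using mem_indep_sets_iff by blast

text \<open>The simplifier cannot decide equality of set literals such as {1,3} = {1,4}, but it
  evaluates their membership bit vectors.\<close>
lemma sum_set_eq_sum_list_by_bits:
  fixes xs :: "nat set list"
  shows
  "distinct (map (\<lambda>S. map (\<lambda>i. i \<in> S) [1,2,3,4,5,6]) xs) \<Longrightarrow> sum f (set xs) = sum_list (map f xs)"
  by (simp add: distinct_map sum.distinct_set_conv_list)

lemma sum_indep_sets: "(\<Sum>S\<in>indep_sets. f S) = f {} + f {1} + f {2} + f {3} + f {4} + f {5} + f {6}
    + f {1,3} + f {1,4} + f {1,5} + f {2,4} + f {2,5} + f {2,6} + f {3,5} + f {3,6} + f {4,6}
    + f {1,3,5} + f {2,4,6}"
  unfolding indep_sets_def by (subst sum_set_eq_sum_list_by_bits) (simp_all add: add.assoc)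

lemma P_eq_set: "P = set [{1,3},{1,4},{1,5},{2,4},{2,5},{2,6},{3,5},{3,6},{4,6}]"
  unfolding P_def by simp

lemma sum_P: "(\<Sum>p\<in>P. f p) = f {1,3} + f {1,4} + f {1,5} + f {2,4} + f {2,5} + f {2,6}
    + f {3,5} + f {3,6} + f {4,6}"
  unfolding P_eq_set by (subst sum_set_eq_sum_list_by_bits) (simp_all add: add.assoc)

lemma sum_triangles: "(\<Sum>t\<in>triangles. f t) = f {1,3,5} + f {2,4,6}"
  unfolding triangles_def by (subst sum.insert) auto

lemma finite_P [simp]: "finite P"
  unfolding P_def by simp

lemma finite_triangles [simp]: "finite triangles"
  unfolding triangles_def by simp

lemma empty_notin_P [simp]: "{} \<notin> P"
  unfolding P_def by simp

lemma card_P: "card P = 9"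
  unfolding card_eq_sum sum_P by simp

lemma P_subset_N2: "P \<subseteq> N2"
  unfolding P_def N2_def Q_eq by simp

lemma cycle_edges_subset_N2: "cycle_edges \<subseteq> N2"
  unfolding cycle_edges_def N2_def Q_eq by simp

lemma mem_P_subset_Q: "p \<in> P \<Longrightarrow> p \<subseteq> Q"
  using P_subset_N2 unfolding N2_def by blast

lemma card_mem_P: "p \<in> P \<Longrightarrow> card p = 2"
  using P_subset_N2 unfolding N2_def by blast

lemma triangles_subset_Q: "t \<in> triangles \<Longrightarrow> t \<subseteq> Q"
  unfolding triangles_def Q_eq by auto

lemma singleton_subset_Q_if_mem_triangle: "t \<in> triangles \<Longrightarrow> c \<in> t \<Longrightarrow> {c} \<subseteq> Q"
  using triangles_subset_Q by blast

lemma indep_sets_cases: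
  assumes "S \<in> indep_sets"
  obtains "S = {}" | "S \<in> P" | t c where "t \<in> triangles" "c \<in> t" "S = {c}" | "S \<in> triangles"
proof -
  have "S = {} \<or> S \<in> P \<or> (\<exists>t\<in>triangles. \<exists>c\<in>t. S = {c}) \<or> S \<in> triangles"
    using assms unfolding indep_sets_def P_def triangles_def
    by (simp only: set_simps insert_iff empty_iff simp_thms) (elim disjE; simp)
  then show ?thesis using that by blast
qed

lemma P_subset_indep_sets: "P \<subseteq> indep_sets"
  unfolding P_def indep_sets_def by simp

lemma empty_in_indep_sets: "{} \<in> indep_sets"
  unfolding indep_sets_def by simp

definition psi_amp :: "nat set \<Rightarrow> complex" where
  "psi_amp S = (if S = {} then 1 else if S \<in> P then 1/3 else 0)"

lemma Psi_eq: "Psi S = psi_amp S / complex_of_real (sqrt 2)"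
proof -
  have "(\<Sum>p\<in>P. ket p S) = (if S \<in> P then 1 else 0)"
    unfolding ket_def by (simp add: sum.delta')
  then show ?thesis unfolding Psi_def Dbar_def psi_amp_def by (auto simp: ket_def)
qed

lemma cnj_psi_amp [simp]: "cnj (psi_amp S) = psi_amp S"
  unfolding psi_amp_def by simp

lemma psi_amp_empty [simp]: "psi_amp {} = 1"
  unfolding psi_amp_def by simp

lemma psi_amp_P: "p \<in> P \<Longrightarrow> psi_amp p = 1/3"
  unfolding psi_amp_def using empty_notin_P by (cases "p = {}") simp_all

lemma psi_amp_singleton: "psi_amp {c} = 0"
proof -
  have "{c} \<notin> P" using card_mem_P by fastforce
  then show ?thesis unfolding psi_amp_def by simp
qed

lemma psi_amp_triangle:
  assumes "t \<in> triangles"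
  shows "psi_amp t = 0"
proof -
  have "card t = 3" "t \<noteq> {}" using assms unfolding triangles_def by auto
  then have "t \<notin> P" using card_mem_P by fastforce
  with \<open>t \<noteq> {}\<close> show ?thesis unfolding psi_amp_def by simp
qed

lemma psi_amp_outside_indep_sets: "S \<notin> indep_sets \<Longrightarrow> psi_amp S = 0"
  using P_subset_indep_sets empty_in_indep_sets unfolding psi_amp_def by auto

lemma Psi_outside_indep_sets: "S \<notin> indep_sets \<Longrightarrow> Psi S = 0"
  by (simp add: Psi_eq psi_amp_outside_indep_sets)

lemma Psi_mult_cnj_Psi: "Psi S * cnj (Psi T) = psi_amp S * psi_amp T / 2"
proof -
  have "complex_of_real (sqrt 2) * complex_of_real (sqrt 2) = 2"
    by (simp flip: of_real_mult)
  then show ?thesis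
    unfolding Psi_eq
    by (simp only: complex_cnj_divide complex_cnj_complex_of_real cnj_psi_amp times_divide_times_eq)
qed

lemma sum_psi_amp_sq: "(\<Sum>S\<in>Pow Q. psi_amp S * psi_amp S) = 2"
proof -
  have "(\<Sum>S\<in>Pow Q. psi_amp S * psi_amp S) = (\<Sum>S\<in>insert {} P. psi_amp S * psi_amp S)"
    by (rule sum.mono_neutral_right) (use mem_P_subset_Q in \<open>auto simp: psi_amp_def\<close>)
  also have "\<dots> = psi_amp {} * psi_amp {} + (\<Sum>S\<in>P. psi_amp S * psi_amp S)"
    by simp
  also have "(\<Sum>S\<in>P. psi_amp S * psi_amp S) = (\<Sum>S\<in>P. 1/9)"
    by (rule sum.cong) (auto simp: psi_amp_def)
  finally show ?thesis by (simp add: card_P psi_amp_def)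
qed

lemma inner_Psi_Psi: "inner Psi Psi = 1"
proof -
  have "inner Psi Psi = (\<Sum>S\<in>Pow Q. psi_amp S * psi_amp S) / 2"
    unfolding inner_def Psi_eq
    by (simp add: sum_divide_distrib flip: of_real_mult)
  then show ?thesis by (simp add: sum_psi_amp_sq)
qed

definition expval :: "qop \<Rightarrow> qop \<Rightarrow> complex" where
  "expval W \<sigma> = (\<Sum>S\<in>Pow Q. \<Sum>T\<in>Pow Q. \<sigma> S T * W T S)"

lemma expval_proj: "expval W (proj \<phi>) = inner \<phi> (app W \<phi>)"
proof -
  have "expval W (proj \<phi>) = (\<Sum>S\<in>Pow Q. \<Sum>T\<in>Pow Q. cnj (\<phi> T) * W T S * \<phi> S)"
    unfolding expval_def by (auto simp: proj_def intro!: sum.cong)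
  also have "\<dots> = qform W \<phi>"
    unfolding qform_eq_sum by (rule sum.swap)
  finally show ?thesis unfolding qform_def .
qed

lemma expval_sum: "expval (\<lambda>S T. \<Sum>i\<in>I. W i S T) \<sigma> = (\<Sum>i\<in>I. expval (W i) \<sigma>)"
proof -
  have "expval (\<lambda>S T. \<Sum>i\<in>I. W i S T) \<sigma> = (\<Sum>S\<in>Pow Q. \<Sum>i\<in>I. \<Sum>T\<in>Pow Q. \<sigma> S T * W i T S)"
    unfolding expval_def sum_distrib_left by (intro sum.cong refl sum.swap)
  then show ?thesis
    unfolding expval_def by (simp add: sum.swap[of _ "Pow Q" I])
qed

lemma expval_add: "expval (\<lambda>S T. A S T + B S T) \<sigma> = expval A \<sigma> + expval B \<sigma>"
  unfolding expval_def by (simp add: distrib_left sum.distrib)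

lemma sum_Pow_Q_disjoint: "(\<Sum>C\<in>Pow Q. if C \<inter> p = {} then f C else 0) = (\<Sum>C\<in>Pow (Q - p). f C)"
proof -
  have "(\<Sum>C\<in>Pow Q. if C \<inter> p = {} then f C else 0) = (\<Sum>C\<in>{C\<in>Pow Q. C \<inter> p = {}}. f C)"
    by (rule sum.inter_filter[symmetric]) simp
  also have "{C\<in>Pow Q. C \<inter> p = {}} = Pow (Q - p)" by auto
  finally show ?thesis .
qed

lemma expval_raise2:
  assumes "p \<subseteq> Q"
  shows "expval (raise2 p) \<sigma> = (\<Sum>C\<in>Pow (Q - p). \<sigma> C (C \<union> p))"
proof -
  have row: "(\<Sum>T\<in>Pow Q. \<sigma> C T * raise2 p T C) = (if C \<inter> p = {} then \<sigma> C (C \<union> p) else 0)"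
    if "C \<in> Pow Q" for C
    using that assms by (simp add: raise2_def if_distrib[of "(*) _"] cong: if_cong)
  show ?thesis
    unfolding expval_def sum_Pow_Q_disjoint[symmetric] using row by (rule sum.cong[OF refl])
qed

lemma expval_lower2:
  assumes "p \<subseteq> Q"
  shows "expval (lower2 p) \<sigma> = (\<Sum>C\<in>Pow (Q - p). \<sigma> (C \<union> p) C)"
proof -
  have col: "(\<Sum>S\<in>Pow Q. \<sigma> S C * lower2 p C S) = (if C \<inter> p = {} then \<sigma> (C \<union> p) C else 0)"
    if "C \<in> Pow Q" for C
    using that assms by (simp add: lower2_def if_distrib[of "(*) _"] cong: if_cong)
  have "expval (lower2 p) \<sigma> = (\<Sum>C\<in>Pow Q. \<Sum>S\<in>Pow Q. \<sigma> S C * lower2 p C S)"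
    unfolding expval_def by (rule sum.swap)
  also have "\<dots> = (\<Sum>C\<in>Pow Q. if C \<inter> p = {} then \<sigma> (C \<union> p) C else 0)"
    using col by (rule sum.cong[OF refl])
  finally show ?thesis by (simp only: sum_Pow_Q_disjoint)
qed

lemma expval_W6: "expval W6 \<sigma> = (\<Sum>p\<in>P. \<Sum>C\<in>Pow (Q - p). \<sigma> C (C \<union> p) + \<sigma> (C \<union> p) C)"
  unfolding W6_def expval_sum expval_add
  by (simp add: expval_raise2 expval_lower2 mem_P_subset_Q sum.distrib)

lemma expval_W6_ptrace: "expval W6 \<sigma> = (\<Sum>p\<in>P. ptrace p \<sigma> {} p + ptrace p \<sigma> p {})"
  unfolding expval_W6 ptrace_def by (simp add: sum.distrib Un_commute)

section \<open>A sum-of-squares certificate\<close>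

definition supported_on_indep_sets :: "qop \<Rightarrow> bool" where
  "supported_on_indep_sets \<sigma> \<longleftrightarrow> (\<forall>S T. S \<notin> indep_sets \<longrightarrow> \<sigma> S T = 0 \<and> \<sigma> T S = 0)"

lemma supported_on_indep_setsI:
  assumes dens: "density \<sigma>" and diag: "\<And>S. S \<subseteq> Q \<Longrightarrow> S \<notin> indep_sets \<Longrightarrow> \<sigma> S S = 0"
  shows "supported_on_indep_sets \<sigma>"
  unfolding supported_on_indep_sets_def
proof (intro allI impI)
  fix S T assume S: "S \<notin> indep_sets"
  show "\<sigma> S T = 0 \<and> \<sigma> T S = 0"
  proof (cases "S \<subseteq> Q")
    case True
    then have "qform \<sigma> (ket S) = 0" using diag S by (simp add: qform_ket)
    then show ?thesis using density_qform_ket_zero[OF dens _ True] by blast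
  next
    case False
    then show ?thesis by (simp add: density_vanishes_outside[OF dens])
  qed
qed

lemma supported_on_indep_sets_proj_Psi: "supported_on_indep_sets (proj Psi)"
  unfolding supported_on_indep_sets_def proj_def Psi_eq by (simp add: psi_amp_outside_indep_sets)

lemma trace_supported_on_indep_sets:
  "supported_on_indep_sets \<sigma> \<Longrightarrow> (\<Sum>S\<in>Pow Q. \<sigma> S S) = (\<Sum>S\<in>indep_sets. \<sigma> S S)"
  by (rule sum.mono_neutral_right[OF finite_Pow_Q indep_sets_subset_Pow_Q])
    (auto simp: supported_on_indep_sets_def)

lemma expval_W6_supported_on_indep_sets:
  assumes "supported_on_indep_sets \<sigma>"
  shows "expval W6 \<sigma> =
    (\<Sum>p\<in>P. \<Sum>C\<in>indep_sets. if C \<inter> p = {} then \<sigma> C (C \<union> p) + \<sigma> (C \<union> p) C else 0)"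
  unfolding expval_W6 sum_Pow_Q_disjoint[symmetric]
  by (intro sum.cong refl sum.mono_neutral_right[OF finite_Pow_Q indep_sets_subset_Pow_Q])
    (use assms in \<open>auto simp: supported_on_indep_sets_def\<close>)

definition pair_vec :: "nat set \<Rightarrow> qvec" where
  "pair_vec p = (\<lambda>S. ket p S + (-1/3) * ket {} S)"

definition triangle_vec :: "nat set \<Rightarrow> nat \<Rightarrow> qvec" where
  "triangle_vec t c = (\<lambda>S. ket t S + (-1) * ket {c} S)"

lemma qform_pair_vec:
  "p \<subseteq> Q \<Longrightarrow> qform \<sigma> (pair_vec p) = \<sigma> p p - (\<sigma> p {} + \<sigma> {} p) / 3 + \<sigma> {} {} / 9"
  using qform_ket_add_ket[of p "{}" \<sigma> "-1/3"] unfolding pair_vec_def by (simp add: field_simps)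

lemma qform_triangle_vec:
  "t \<subseteq> Q \<Longrightarrow> c \<in> Q \<Longrightarrow> qform \<sigma> (triangle_vec t c) = \<sigma> t t - \<sigma> t {c} - \<sigma> {c} t + \<sigma> {c} {c}"
  using qform_ket_add_ket[of t "{c}" \<sigma> "-1"] unfolding triangle_vec_def by simp

lemma trace_minus_expval_W6_eq_sos:
  assumes "supported_on_indep_sets \<sigma>"
  shows "3 * (\<Sum>S\<in>Pow Q. \<sigma> S S) - expval W6 \<sigma> =
    (\<Sum>p\<in>P. 3 * qform \<sigma> (pair_vec p))
    + (\<Sum>t\<in>triangles. \<Sum>c\<in>t. qform \<sigma> (triangle_vec t c) + 2 * qform \<sigma> (ket {c}))"
proof -
  have vanish: "\<sigma> S T = 0" "\<sigma> T S = 0" if "S \<notin> indep_sets" for S T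
    using assms that unfolding supported_on_indep_sets_def by auto
  show ?thesis
    unfolding trace_supported_on_indep_sets[OF assms] expval_W6_supported_on_indep_sets[OF assms]
      sum_indep_sets sum_P sum_triangles
    by (simp add: qform_pair_vec qform_triangle_vec qform_ket Q_eq vanish mem_indep_sets_iff
        cycle_edges_def insert_commute)
      (simp add: field_simps)
qed

lemma sos_terms_vanish_if_expval_W6_ge_3:
  assumes dens: "density \<sigma>" and supp: "supported_on_indep_sets \<sigma>" and ge: "3 \<le> Re (expval W6 \<sigma>)"
  shows "\<forall>p\<in>P. qform \<sigma> (pair_vec p) = 0"
    and "\<forall>t\<in>triangles. \<forall>c\<in>t. qform \<sigma> (triangle_vec t c) = 0 \<and> qform \<sigma> (ket {c}) = 0"
proof -
  define A where "A = (\<Sum>p\<in>P. 3 * qform \<sigma> (pair_vec p))"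
  define B where "B = (\<Sum>t\<in>triangles. \<Sum>c\<in>t. qform \<sigma> (triangle_vec t c) + 2 * qform \<sigma> (ket {c}))"
  have nonneg: "0 \<le> qform \<sigma> w" for w by (rule density_qform_nonneg[OF dens])
  have pair_nonneg: "0 \<le> 3 * qform \<sigma> (pair_vec p)" for p
    by (intro mult_nonneg_nonneg nonneg) (simp add: less_eq_complex_def)
  have tri_nonneg: "0 \<le> 2 * qform \<sigma> (ket {c})" for c
    by (intro mult_nonneg_nonneg nonneg) (simp add: less_eq_complex_def)
  have trace: "(\<Sum>S\<in>Pow Q. \<sigma> S S) = 1" using dens unfolding density_def by blast
  have "A + B = 3 - expval W6 \<sigma>"
    using trace_minus_expval_W6_eq_sos[OF supp] unfolding A_def B_def trace by simp
  moreover have "0 \<le> A"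
    unfolding A_def by (intro sum_nonneg pair_nonneg)
  moreover have "0 \<le> B"
    unfolding B_def by (intro sum_nonneg add_nonneg_nonneg tri_nonneg nonneg)
  ultimately have "A + B = 0" and "0 \<le> A" "0 \<le> B"
    using ge by (auto simp: less_eq_complex_def complex_eq_iff)
  then have "A = 0" "B = 0" by (simp_all add: add_nonneg_eq_0_iff)
  show "\<forall>p\<in>P. qform \<sigma> (pair_vec p) = 0"
    using \<open>A = 0\<close> unfolding A_def by (simp add: sum_nonneg_eq_0_iff pair_nonneg)
  show "\<forall>t\<in>triangles. \<forall>c\<in>t. qform \<sigma> (triangle_vec t c) = 0 \<and> qform \<sigma> (ket {c}) = 0"
  proof -
    have term_nonneg: "0 \<le> qform \<sigma> (triangle_vec t c) + 2 * qform \<sigma> (ket {c})" for t c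
      by (intro add_nonneg_nonneg nonneg tri_nonneg)
    have "\<forall>t\<in>triangles. (\<Sum>c\<in>t. qform \<sigma> (triangle_vec t c) + 2 * qform \<sigma> (ket {c})) = 0"
      using \<open>B = 0\<close> unfolding B_def by (simp add: sum_nonneg_eq_0_iff sum_nonneg term_nonneg)
    then have "\<forall>t\<in>triangles. \<forall>c\<in>t. qform \<sigma> (triangle_vec t c) + 2 * qform \<sigma> (ket {c}) = 0"
      using finite_subset[OF triangles_subset_Q finite_Q]
      by (simp add: sum_nonneg_eq_0_iff term_nonneg)
    then show ?thesis by (simp add: add_nonneg_eq_0_iff nonneg tri_nonneg)
  qed
qed

lemma eq_psi_amp_multiple:
  fixes M :: "nat set \<Rightarrow> complex"
  assumes pair: "\<And>p. p \<in> P \<Longrightarrow> M p = M {} / 3"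
    and single: "\<And>t c. t \<in> triangles \<Longrightarrow> c \<in> t \<Longrightarrow> M {c} = 0"
    and triangle: "\<And>t c. t \<in> triangles \<Longrightarrow> c \<in> t \<Longrightarrow> M t = M {c}"
    and outside: "\<And>S. S \<notin> indep_sets \<Longrightarrow> M S = 0"
  shows "M S = psi_amp S * M {}"
proof (cases "S \<in> indep_sets")
  case True
  then show ?thesis
  proof (cases rule: indep_sets_cases)
    case 1
    then show ?thesis by simp
  next
    case 2
    then show ?thesis by (simp add: pair psi_amp_P)
  next
    case (3 t c)
    then show ?thesis by (simp add: single psi_amp_singleton)
  next
    case 4
    moreover obtain c where "c \<in> S" using 4 unfolding triangles_def by auto
    ultimately show ?thesis by (simp add: single triangle psi_amp_triangle)
  qed
next
  case False
  then show ?thesis by (simp add: outside psi_amp_outside_indep_sets)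
qed

lemma eq_proj_Psi_if_sos_terms_vanish:
  assumes dens: "density \<sigma>" and supp: "supported_on_indep_sets \<sigma>"
    and pair: "\<forall>p\<in>P. qform \<sigma> (pair_vec p) = 0"
    and triangle: "\<forall>t\<in>triangles. \<forall>c\<in>t. qform \<sigma> (triangle_vec t c) = 0 \<and> qform \<sigma> (ket {c}) = 0"
  shows "\<sigma> = proj Psi"
proof -
  have pair_entries: "\<sigma> X p = \<sigma> X {} / 3 \<and> \<sigma> p X = \<sigma> {} X / 3" if "p \<in> P" for X p
    using density_qform_ket_add_ket_zero[OF dens _ mem_P_subset_Q[OF that] empty_subsetI,
        of "-1/3" X] pair that unfolding pair_vec_def by (auto simp: field_simps)
  have single_entries: "\<sigma> X {c} = 0 \<and> \<sigma> {c} X = 0" if "t \<in> triangles" "c \<in> t" for X t c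
    using density_qform_ket_zero[OF dens _ singleton_subset_Q_if_mem_triangle[OF that]] triangle that
    by blast
  have triangle_entries: "\<sigma> X t = \<sigma> X {c} \<and> \<sigma> t X = \<sigma> {c} X"
    if "t \<in> triangles" "c \<in> t" for X t c
    using density_qform_ket_add_ket_zero[OF dens _ triangles_subset_Q[OF that(1)]
        singleton_subset_Q_if_mem_triangle[OF that], of "-1" X] triangle that unfolding triangle_vec_def by auto
  have outside: "\<sigma> X S = 0 \<and> \<sigma> S X = 0" if "S \<notin> indep_sets" for X S
    using supp that unfolding supported_on_indep_sets_def by blast
  have column: "\<sigma> X S = psi_amp S * \<sigma> X {}" for X S
    by (rule eq_psi_amp_multiple)
      (use pair_entries single_entries triangle_entries outside in blast)+
  have row: "\<sigma> S X = psi_amp S * \<sigma> {} X" for X S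
    by (rule eq_psi_amp_multiple[where M = "\<lambda>S. \<sigma> S X"])
      (use pair_entries single_entries triangle_entries outside in blast)+
  have entries: "\<sigma> S T = psi_amp S * psi_amp T * \<sigma> {} {}" for S T
    using column[of S T] row[of S "{}"] by simp
  have "1 = (\<Sum>S\<in>Pow Q. \<sigma> S S)" using dens unfolding density_def by simp
  also have "\<dots> = (\<Sum>S\<in>Pow Q. psi_amp S * psi_amp S * \<sigma> {} {})"
    by (rule sum.cong[OF refl]) (rule entries)
  also have "\<dots> = (\<Sum>S\<in>Pow Q. psi_amp S * psi_amp S) * \<sigma> {} {}"
    by (simp add: sum_distrib_right)
  finally have "2 * \<sigma> {} {} = 1"
    unfolding sum_psi_amp_sq by simp
  then have corner: "\<sigma> {} {} = 1/2"
    by (simp add: eq_divide_eq mult.commute)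
  have entries_half: "\<sigma> S T = psi_amp S * psi_amp T / 2" for S T
    using entries[of S T] unfolding corner by simp
  have psi_amp_Q: "psi_amp S = 0" if "\<not> S \<subseteq> Q" for S
    using that indep_sets_subset_Pow_Q psi_amp_outside_indep_sets by blast
  show ?thesis
  proof (intro ext)
    fix S T
    show "\<sigma> S T = proj Psi S T"
    proof (cases "S \<subseteq> Q \<and> T \<subseteq> Q")
      case True
      then show ?thesis
        unfolding proj_def entries_half by (simp add: Psi_mult_cnj_Psi)
    next
      case False
      then have "psi_amp S = 0 \<or> psi_amp T = 0" using psi_amp_Q by blast
      then show ?thesis using False unfolding proj_def entries_half by auto
    qed
  qed
qed

lemma eq_proj_Psi_if_expval_W6_ge_3:
  "density \<sigma> \<Longrightarrow> supported_on_indep_sets \<sigma> \<Longrightarrow> 3 \<le> Re (expval W6 \<sigma>) \<Longrightarrow> \<sigma> = proj Psi"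
  using eq_proj_Psi_if_sos_terms_vanish sos_terms_vanish_if_expval_W6_ge_3 by blast

lemma expval_W6_proj_Psi: "expval W6 (proj Psi) = 3"
proof -
  have "inner Psi (pair_vec p) = 0" if "p \<in> P" for p
    using inner_ket_add_ket[OF mem_P_subset_Q[OF that] empty_subsetI, of Psi "-1/3"] that
    unfolding pair_vec_def by (simp add: Psi_eq psi_amp_P)
  moreover have "inner Psi (triangle_vec t c) = 0" "inner Psi (ket {c}) = 0"
    if "t \<in> triangles" "c \<in> t" for t c
    using inner_ket_add_ket[OF triangles_subset_Q[OF that(1)]
        singleton_subset_Q_if_mem_triangle[OF that], of Psi "-1"] inner_ket[OF singleton_subset_Q_if_mem_triangle[OF that], of Psi] that
    unfolding triangle_vec_def by (simp_all add: Psi_eq psi_amp_singleton psi_amp_triangle)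
  ultimately have "3 * (\<Sum>S\<in>Pow Q. proj Psi S S) - expval W6 (proj Psi) = 0"
    unfolding trace_minus_expval_W6_eq_sos[OF supported_on_indep_sets_proj_Psi] qform_proj by simp
  moreover have "(\<Sum>S\<in>Pow Q. proj Psi S S) = 1"
    using density_proj[OF inner_Psi_Psi] unfolding density_def by blast
  ultimately show ?thesis by simp
qed

section \<open>Marginals and the DQLS subspace\<close>

lemma ptrace_proj_Psi_cycle_edge:
  assumes "e \<in> cycle_edges"
  shows "ptrace e (proj Psi) e B = 0"
proof -
  have Psi_zero: "Psi (e \<union> C) = 0" for C
    using assms by (simp add: Psi_outside_indep_sets not_indep_if_cycle_edge_subset)
  show ?thesis unfolding ptrace_def proj_def Psi_zero by (simp cong: if_cong)
qed

lemma ptrace_diag: "ptrace e \<rho> e e = (\<Sum>C\<in>Pow (Q - e). \<rho> (e \<union> C) (e \<union> C))"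
  unfolding ptrace_def by simp

lemma density_same_marginals_vanishes_off_indep_sets:
  assumes dens: "density \<sigma>" and marg: "\<forall>N\<in>N2. ptrace N \<sigma> = ptrace N (proj Psi)"
    and S: "S \<subseteq> Q" "S \<notin> indep_sets"
  shows "\<sigma> S S = 0"
proof -
  obtain e where e: "e \<in> cycle_edges" "e \<subseteq> S" using S mem_indep_sets_iff by blast
  have "(\<Sum>C\<in>Pow (Q - e). \<sigma> (e \<union> C) (e \<union> C)) = 0"
    using marg cycle_edges_subset_N2 e(1) ptrace_proj_Psi_cycle_edge[OF e(1)]
    unfolding ptrace_diag[symmetric] by auto
  moreover have "0 \<le> \<sigma> (e \<union> C) (e \<union> C)" if "C \<in> Pow (Q - e)" for C
  proof -
    have "e \<union> C \<subseteq> Q" using that e S by auto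
    then show ?thesis using density_qform_nonneg[OF dens] qform_ket by metis
  qed
  ultimately have "\<forall>C\<in>Pow (Q - e). \<sigma> (e \<union> C) (e \<union> C) = 0"
    using sum_nonneg_eq_0_iff[of "Pow (Q - e)" "\<lambda>C. \<sigma> (e \<union> C) (e \<union> C)"] by auto
  moreover have "S - e \<in> Pow (Q - e)" "e \<union> (S - e) = S" using e S by auto
  ultimately show ?thesis by metis
qed

lemma DQLS_vanishes_off_indep_sets:
  assumes \<phi>: "\<phi> \<in> DQLS N2 Psi" and S: "S \<subseteq> Q" "S \<notin> indep_sets"
  shows "\<phi> S = 0"
proof -
  obtain e where e: "e \<in> cycle_edges" "e \<subseteq> S" using S mem_indep_sets_iff by blast
  then have "\<phi> \<in> supp (tensor_id e (ptrace e (proj Psi)))"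
    using \<phi> cycle_edges_subset_N2 unfolding DQLS_def by blast
  then obtain v where \<phi>_eq: "\<phi> = app (tensor_id e (ptrace e (proj Psi))) v"
    unfolding supp_def by blast
  have ptrace_zero: "ptrace e (proj Psi) (S \<inter> e) B = 0" for B
    using e ptrace_proj_Psi_cycle_edge by (simp add: Int_absorb1)
  show ?thesis
    unfolding \<phi>_eq by (simp add: app_def tensor_id_def ptrace_zero cong: if_cong)
qed

theorem mainTheorem6:
  shows "UDA N2 (proj Psi) \<and>
    (\<forall>\<phi>. \<phi> \<in> DQLS N2 Psi \<and> inner \<phi> \<phi> = 1 \<and> proj \<phi> \<noteq> proj Psi \<longrightarrow>
        Re (inner \<phi> (app W6 \<phi>)) < Re (inner Psi (app W6 Psi)))"
proof (intro conjI allI impI)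
  show "UDA N2 (proj Psi)"
    unfolding UDA_def
  proof (intro allI impI, elim conjE)
    fix \<sigma> assume dens: "density \<sigma>" and marg: "\<forall>N\<in>N2. ptrace N \<sigma> = ptrace N (proj Psi)"
    have "supported_on_indep_sets \<sigma>"
      using supported_on_indep_setsI[OF dens]
        density_same_marginals_vanishes_off_indep_sets[OF dens marg]
      by blast
    moreover have "expval W6 \<sigma> = expval W6 (proj Psi)"
      unfolding expval_W6_ptrace using marg P_subset_N2 by (auto intro!: sum.cong)
    ultimately show "\<sigma> = proj Psi"
      using eq_proj_Psi_if_expval_W6_ge_3[OF dens] expval_W6_proj_Psi by simp
  qed
next
  fix \<phi> assume \<phi>: "\<phi> \<in> DQLS N2 Psi \<and> inner \<phi> \<phi> = 1 \<and> proj \<phi> \<noteq> proj Psi"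
  then have dens: "density (proj \<phi>)" by (simp add: density_proj)
  have "supported_on_indep_sets (proj \<phi>)"
    using supported_on_indep_setsI[OF dens] DQLS_vanishes_off_indep_sets \<phi> by (simp add: proj_def)
  then have "\<not> 3 \<le> Re (expval W6 (proj \<phi>))"
    using eq_proj_Psi_if_expval_W6_ge_3[OF dens] \<phi> by blast
  then show "Re (inner \<phi> (app W6 \<phi>)) < Re (inner Psi (app W6 Psi))"
    using expval_W6_proj_Psi unfolding expval_proj[symmetric] by simp
qed

end
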